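(* Assume $\kappa^\infty_i\ge0$ for all $i\ge2$, and let $\xi<1$ satisfy $\alpha\xi>\alpha_{\rm s}$. Let $I^*=[-a^*,a^*]$ be such that $h^\Sigma(\mathcal X_{I^*})\subseteq\mathcal X_{I^*}$. Then for all $\boldsymbol x,\boldsymbol y\in\mathcal X_{I^*}$, $$\|h^\Sigma(\boldsymbol x)-h^\Sigma(\boldsymbol y)\|_\xi\le R'\Big(\frac1{\xi\alpha}\Big)\Big(\frac1{\xi\alpha}\Big)^2\|\boldsymbol x-\boldsymbol y\|_\xi,\qquad\text{and}\qquad R'\Big(\frac1{\xi\alpha}\Big)\Big(\frac1{\xi\alpha}\Big)^2<1.$$
   Context: $\Lambda$ compactly supported with support supremum $b$; $G(z)=\mathbb E\{(z-\Lambda)^{-1}\}$, $\alpha_{\rm s}=1/G(b^+)$; $\kappa^\infty_k$ the free cumulants of $\Lambda$; $R'(z)=\sum_{i\ge0}(i+1)\kappa^\infty_{i+2}z^i$ (convergent for $0\le z<1/\alpha_{\rm s}$); $\rho_\alpha^2=-1/(\alpha^2G'(G^{-1}(1/\alpha)))$. Arrays $\boldsymbol x=(x_{s,t})_{s,t\le0}$ carry the norm $\|\boldsymbol x\|_\xi=\sup_{s,t\le0}\xi^{\max(|s|,|t|)}|x_{s,t}|$; $\mathcal X_I=\{\boldsymbol x:x_{s,t}\in I\ \forall s,t\}$. $h^\Sigma_{s,t}(\boldsymbol x)=\sum_{j,k\ge0}\kappa^\infty_{j+k+2}(1/\alpha)^{j+k+2}\big((\alpha\rho_\alpha)^2+x_{s-j,t-k}\big)$.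 *)

theory Defs
  imports "HOL-Probability.Probability" "HOL-Computational_Algebra.Formal_Power_Series"
begin

text \<open>The law of Lambda is a Borel probability measure mu on the reals.\<close>

definition msupp :: "real measure \<Rightarrow> real set" where
  "msupp \<mu> = {x. \<forall>e>0. emeasure \<mu> (ball x e) > 0}"

definition supp_sup :: "real measure \<Rightarrow> real" where
  "supp_sup \<mu> = Sup (msupp \<mu>)"

definition stieltjes :: "real measure \<Rightarrow> real \<Rightarrow> real" where
  "stieltjes \<mu> z = (\<integral>x. 1 / (z - x) \<partial>\<mu>)"

text \<open>G(b+) as an extended real (possibly infinite), alpha_s = 1/G(b+) with 1/infinity = 0.\<close>
definition G_bplus :: "real measure \<Rightarrow> ereal" where
  "G_bplus \<mu> = Lim (at_right (supp_sup \<mu>)) (\<lambda>z. ereal (stieltjes \<mu> z))"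

definition alpha_s :: "real measure \<Rightarrow> real" where
  "alpha_s \<mu> = real_of_ereal (inverse (G_bplus \<mu>))"

definition moment :: "real measure \<Rightarrow> nat \<Rightarrow> real" where
  "moment \<mu> n = (\<integral>x. x ^ n \<partial>\<mu>)"

definition moment_fps :: "real measure \<Rightarrow> real fps" where
  "moment_fps \<mu> = Abs_fps (moment \<mu>)"

text \<open>Free cumulants via the moment--free-cumulant relation
  m_n = sum_{s=1}^n kappa_s sum_{i_1+...+i_s = n-s} m_{i_1}...m_{i_s}.\<close>
definition free_cumulant :: "real measure \<Rightarrow> nat \<Rightarrow> real" where
  "free_cumulant \<mu> = (THE \<kappa>. \<kappa> 0 = 0 \<and>
      (\<forall>n\<ge>1. moment \<mu> n = (\<Sum>s=1..n. \<kappa> s * fps_nth (moment_fps \<mu> ^ s) (n - s))))"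

definition Rprime :: "real measure \<Rightarrow> real \<Rightarrow> real" where
  "Rprime \<mu> z = (\<Sum>i. real (i + 1) * free_cumulant \<mu> (i + 2) * z ^ i)"

definition G_inv :: "real measure \<Rightarrow> real \<Rightarrow> real" where
  "G_inv \<mu> y = (THE z. z > supp_sup \<mu> \<and> stieltjes \<mu> z = y)"

definition rho_sq :: "real measure \<Rightarrow> real \<Rightarrow> real" where
  "rho_sq \<mu> \<alpha> = - 1 / (\<alpha>\<^sup>2 * deriv (stieltjes \<mu>) (G_inv \<mu> (1 / \<alpha>)))"

text \<open>Arrays x = (x_{s,t})_{s,t \<le> 0} as functions int => int => real (values at
  positive indices are irrelevant).\<close>
definition hSigma :: "real measure \<Rightarrow> real \<Rightarrow> (int \<Rightarrow> int \<Rightarrow> real) \<Rightarrow> int \<Rightarrow> int \<Rightarrow> real" where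
  "hSigma \<mu> \<alpha> x = (\<lambda>s t. \<Sum>\<^sub>\<infinity>(j, k) \<in> (UNIV :: (nat \<times> nat) set).
      free_cumulant \<mu> (j + k + 2) * (1 / \<alpha>) ^ (j + k + 2) *
      (\<alpha>\<^sup>2 * rho_sq \<mu> \<alpha> + x (s - int j) (t - int k)))"

definition xnorm :: "real \<Rightarrow> (int \<Rightarrow> int \<Rightarrow> real) \<Rightarrow> real" where
  "xnorm \<xi> x = (SUP p \<in> {(s, t). s \<le> 0 \<and> t \<le> 0}.
      \<xi> ^ nat (max \<bar>fst p\<bar> \<bar>snd p\<bar>) * \<bar>x (fst p) (snd p)\<bar>)"

definition XI :: "real set \<Rightarrow> (int \<Rightarrow> int \<Rightarrow> real) set" where
  "XI I = {x. \<forall>s t. s \<le> 0 \<longrightarrow> t \<le> 0 \<longrightarrow> x s t \<in> I}"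

end

(*
  The difference h(x) - h(y) at (s, t) is the convolution of x - y with the kernel
  kappa_(j+k+2) alpha^-(j+k+2).  In the weighted norm a shift (s, t) -> (s - j, t - k) costs
  at most a factor xi^-(j+k), so the Lipschitz constant is
  sum_(j,k) kappa_(j+k+2) u^(j+k+2) = sum_n (n+1) kappa_(n+2) u^(n+2) = R'(u) u^2 with
  u = 1/(xi alpha).

  For the bound below 1, translate Lambda by the infimum of its support.  The translated law
  lives on [0, oo) and differs only in its first cumulant, so its moment series M and
  cumulant series K have nonnegative coefficients and satisfy K(z M(z)) = M(z) - 1.  Since
  u < G(b+), we have u < phi = G(z) = w M(w) for some z > b and w = 1/(z - inf supp), and
  K converges a little beyond phi.  Differentiating the relation gives
  M'(w) = K'(phi) (M(w) + w M'(w)), which forces w K'(phi) < 1, hence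
  sum_n (n+1) kappa_(n+2) phi^(n+2) = phi K'(phi) - K(phi) = 1 - M(w) (1 - w K'(phi)) < 1,
  and the series at u is dominated termwise by this one.
*)

theory Submission
  imports Defs
begin

unbundle no vec_syntax
unbundle fps_syntax

section \<open>Rearranging nonnegative triangular double series\<close>

lemma sum_triangle_swap:
  fixes a :: "nat \<Rightarrow> nat \<Rightarrow> 'a::comm_monoid_add"
  assumes zero: "\<And>i n. n < i \<Longrightarrow> a i n = 0"
  shows "(\<Sum>n<N. \<Sum>i\<le>n. a i n) = (\<Sum>i<N. \<Sum>n<N. a i n)"
proof -
  have "(\<Sum>n<N. \<Sum>i\<le>n. a i n) = (\<Sum>n<N. \<Sum>i<N. a i n)"
  proof (rule sum.cong[OF refl])
    fix n assume "n \<in> {..<N}"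
    then show "(\<Sum>i\<le>n. a i n) = (\<Sum>i<N. a i n)"
      by (intro sum.mono_neutral_left) (auto simp: zero)
  qed
  also have "\<dots> = (\<Sum>i<N. \<Sum>n<N. a i n)" by (rule sum.swap)
  finally show ?thesis .
qed

lemma summable_triangle_diagonals:
  fixes a :: "nat \<Rightarrow> nat \<Rightarrow> real"
  assumes nonneg: "\<And>i n. 0 \<le> a i n" and zero: "\<And>i n. n < i \<Longrightarrow> a i n = 0"
    and rows: "\<And>i. summable (a i)"
    and row_sums: "summable (\<lambda>i. suminf (a i))"
  shows "summable (\<lambda>n. \<Sum>i\<le>n. a i n)" "(\<Sum>n. \<Sum>i\<le>n. a i n) \<le> (\<Sum>i. suminf (a i))"
proof -
  have bound: "(\<Sum>n<N. \<Sum>i\<le>n. a i n) \<le> (\<Sum>i. suminf (a i))" for N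
  proof -
    have "(\<Sum>n<N. \<Sum>i\<le>n. a i n) = (\<Sum>i<N. \<Sum>n<N. a i n)" by (rule sum_triangle_swap[OF zero])
    also have "\<dots> \<le> (\<Sum>i<N. suminf (a i))"
      by (intro sum_mono sum_le_suminf[OF rows]) (auto simp: nonneg)
    also have "\<dots> \<le> (\<Sum>i. suminf (a i))"
      by (intro sum_le_suminf[OF row_sums]) (auto intro: suminf_nonneg rows nonneg)
    finally show ?thesis .
  qed
  show summable: "summable (\<lambda>n. \<Sum>i\<le>n. a i n)"
    by (rule summableI_nonneg_bounded) (auto intro: sum_nonneg nonneg bound)
  show "(\<Sum>n. \<Sum>i\<le>n. a i n) \<le> (\<Sum>i. suminf (a i))"
    using summable bound by (auto intro: suminf_le_const)
qed

lemma summable_triangle_rows: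
  fixes a :: "nat \<Rightarrow> nat \<Rightarrow> real"
  assumes nonneg: "\<And>i n. 0 \<le> a i n" and zero: "\<And>i n. n < i \<Longrightarrow> a i n = 0"
    and rows: "\<And>i. summable (a i)"
    and diag: "summable (\<lambda>n. \<Sum>i\<le>n. a i n)"
  shows "summable (\<lambda>i. suminf (a i))" "(\<Sum>i. suminf (a i)) \<le> (\<Sum>n. \<Sum>i\<le>n. a i n)"
proof -
  have square: "(\<Sum>i<I. \<Sum>n<N. a i n) \<le> (\<Sum>n. \<Sum>i\<le>n. a i n)" for I N
  proof -
    let ?M = "max I N"
    have "(\<Sum>i<I. \<Sum>n<N. a i n) \<le> (\<Sum>i<I. \<Sum>n<?M. a i n)"
      by (intro sum_mono sum_mono2) (auto intro: nonneg)
    also have "\<dots> \<le> (\<Sum>i<?M. \<Sum>n<?M. a i n)"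
      by (intro sum_mono2) (auto intro: sum_nonneg nonneg)
    also have "\<dots> = (\<Sum>n<?M. \<Sum>i\<le>n. a i n)" by (rule sum_triangle_swap[OF zero, symmetric])
    also have "\<dots> \<le> (\<Sum>n. \<Sum>i\<le>n. a i n)"
      by (intro sum_le_suminf[OF diag]) (auto intro: sum_nonneg nonneg)
    finally show ?thesis .
  qed
  have bound: "(\<Sum>i<I. suminf (a i)) \<le> (\<Sum>n. \<Sum>i\<le>n. a i n)" for I
  proof (rule LIMSEQ_le_const2)
    show "(\<lambda>N. \<Sum>i<I. \<Sum>n<N. a i n) \<longlonglongrightarrow> (\<Sum>i<I. suminf (a i))"
      by (intro tendsto_sum summable_LIMSEQ rows)
  qed (use square in auto)
  show summable: "summable (\<lambda>i. suminf (a i))"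
    by (rule summableI_nonneg_bounded) (auto intro: suminf_nonneg rows nonneg bound)
  show "(\<Sum>i. suminf (a i)) \<le> (\<Sum>n. \<Sum>i\<le>n. a i n)"
    using summable bound by (auto intro: suminf_le_const)
qed

lemma suminf_triangle_swap:
  fixes a :: "nat \<Rightarrow> nat \<Rightarrow> real"
  assumes nonneg: "\<And>i n. 0 \<le> a i n" and zero: "\<And>i n. n < i \<Longrightarrow> a i n = 0"
    and rows: "\<And>i. summable (a i)"
    and either: "summable (\<lambda>i. suminf (a i)) \<or> summable (\<lambda>n. \<Sum>i\<le>n. a i n)"
  shows "summable (\<lambda>i. suminf (a i))" "summable (\<lambda>n. \<Sum>i\<le>n. a i n)"
    "(\<Sum>i. suminf (a i)) = (\<Sum>n. \<Sum>i\<le>n. a i n)"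
proof -
  note diagonals = summable_triangle_diagonals[of a] and rows' = summable_triangle_rows[of a]
  have "summable (\<lambda>n. \<Sum>i\<le>n. a i n)" if "summable (\<lambda>i. suminf (a i))"
    by (rule diagonals(1)) (fact nonneg zero rows that)+
  moreover have "summable (\<lambda>i. suminf (a i))" if "summable (\<lambda>n. \<Sum>i\<le>n. a i n)"
    by (rule rows'(1)) (fact nonneg zero rows that)+
  ultimately show rows_sum: "summable (\<lambda>i. suminf (a i))"
    and diag_sum: "summable (\<lambda>n. \<Sum>i\<le>n. a i n)"
    using either by blast+
  have "(\<Sum>n. \<Sum>i\<le>n. a i n) \<le> (\<Sum>i. suminf (a i))"
    by (rule diagonals(2)) (fact nonneg zero rows rows_sum)+
  moreover have "(\<Sum>i. suminf (a i)) \<le> (\<Sum>n. \<Sum>i\<le>n. a i n)"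
    by (rule rows'(2)) (fact nonneg zero rows diag_sum)+
  ultimately show "(\<Sum>i. suminf (a i)) = (\<Sum>n. \<Sum>i\<le>n. a i n)" by linarith
qed

section \<open>Power series with nonnegative coefficients at nonnegative points\<close>

definition fps_nonneg :: "real fps \<Rightarrow> bool" where
  "fps_nonneg f \<longleftrightarrow> (\<forall>n. 0 \<le> f $ n)"

definition fps_summable_at :: "real fps \<Rightarrow> real \<Rightarrow> bool" where
  "fps_summable_at f w \<longleftrightarrow> summable (\<lambda>n. f $ n * w ^ n)"

lemma fps_nonneg_mult: "fps_nonneg f \<Longrightarrow> fps_nonneg g \<Longrightarrow> fps_nonneg (f * g)"
  unfolding fps_nonneg_def fps_mult_nth by (auto intro!: sum_nonneg)

lemma fps_nonneg_power: "fps_nonneg f \<Longrightarrow> fps_nonneg (f ^ k)"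
  by (induction k) (simp_all add: fps_nonneg_mult, simp add: fps_nonneg_def)

lemma fps_nonneg_add: "fps_nonneg f \<Longrightarrow> fps_nonneg g \<Longrightarrow> fps_nonneg (f + g)"
  unfolding fps_nonneg_def by auto

lemma fps_nonneg_X: "fps_nonneg fps_X"
  unfolding fps_nonneg_def by simp

lemma fps_nonneg_compose: "fps_nonneg f \<Longrightarrow> fps_nonneg g \<Longrightarrow> fps_nonneg (f oo g)"
  unfolding fps_nonneg_def fps_compose_nth using fps_nonneg_power[of g, unfolded fps_nonneg_def]
  by (auto intro!: sum_nonneg)

lemma fps_summable_at_1: "fps_summable_at 1 w"
  unfolding fps_summable_at_def by (rule summable_finite[of "{0}"]) auto

lemma eval_fps_nonneg: "fps_nonneg f \<Longrightarrow> 0 \<le> w \<Longrightarrow> fps_summable_at f w \<Longrightarrow> 0 \<le> eval_fps f w"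
  unfolding eval_fps_def fps_nonneg_def fps_summable_at_def by (intro suminf_nonneg) auto

lemma eval_fps_ge_coeff0:
  assumes "fps_nonneg f" "0 \<le> w" "fps_summable_at f w"
  shows "f $ 0 \<le> eval_fps f w"
  using sum_le_suminf[of "\<lambda>n. f $ n * w ^ n" "{0}"] assms
  unfolding eval_fps_def fps_nonneg_def fps_summable_at_def by auto

lemma fps_summable_at_mono:
  assumes f: "fps_nonneg f" and w: "0 \<le> w1" "w1 \<le> w2" and sum: "fps_summable_at f w2"
  shows "fps_summable_at f w1"
  unfolding fps_summable_at_def
proof (rule summable_comparison_test'[OF sum[unfolded fps_summable_at_def]])
  fix n
  have "f $ n * w1 ^ n \<le> f $ n * w2 ^ n"
    using f w by (intro mult_left_mono power_mono) (auto simp: fps_nonneg_def)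
  then show "norm (f $ n * w1 ^ n) \<le> f $ n * w2 ^ n"
    using f w by (simp add: fps_nonneg_def)
qed

lemma eval_fps_mono:
  assumes f: "fps_nonneg f" and w: "0 \<le> w1" "w1 \<le> w2" and sum: "fps_summable_at f w2"
  shows "eval_fps f w1 \<le> eval_fps f w2"
  unfolding eval_fps_def
proof (rule suminf_le)
  fix n show "f $ n * w1 ^ n \<le> f $ n * w2 ^ n"
    using f w by (intro mult_left_mono power_mono) (auto simp: fps_nonneg_def)
qed (use fps_summable_at_mono[OF assms] sum in \<open>auto simp: fps_summable_at_def\<close>)

lemma fps_summable_at_deriv:
  assumes "fps_summable_at f w2" "\<bar>w1\<bar> < \<bar>w2\<bar>"
  shows "fps_summable_at (fps_deriv f) w1"
proof -
  have "summable (\<lambda>n. diffs (fps_nth f) n * w1 ^ n)"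
  proof (rule termdiff_converges[where K="\<bar>w2\<bar>"])
    fix x :: real assume "norm x < \<bar>w2\<bar>"
    then show "summable (\<lambda>n. f $ n * x ^ n)"
      using powser_inside[of "fps_nth f" w2 x] assms(1) unfolding fps_summable_at_def by auto
  qed (use assms(2) in auto)
  then show ?thesis unfolding fps_summable_at_def diffs_def by (simp add: algebra_simps)
qed

lemma eval_fps_add_summable:
  assumes "fps_summable_at f w" "fps_summable_at g w"
  shows "fps_summable_at (f + g) w" "eval_fps (f + g) w = eval_fps f w + eval_fps g w"
  using assms unfolding fps_summable_at_def eval_fps_def
  by (auto simp: distrib_right intro: summable_add suminf_add[symmetric])

lemma eval_fps_diff_summable:
  assumes "fps_summable_at f w" "fps_summable_at g w"
  shows "fps_summable_at (f - g) w" "eval_fps (f - g) w = eval_fps f w - eval_fps g w"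
  using assms unfolding fps_summable_at_def eval_fps_def
  by (auto simp: left_diff_distrib intro: summable_diff suminf_diff[symmetric])

lemma eval_fps_X_mult_summable:
  assumes "fps_summable_at f w"
  shows "fps_summable_at (fps_X * f) w" "eval_fps (fps_X * f) w = w * eval_fps f w"
proof -
  have shift: "(\<lambda>n. (fps_X * f) $ Suc n * w ^ Suc n) = (\<lambda>n. w * (f $ n * w ^ n))" by auto
  have "summable (\<lambda>n. w * (f $ n * w ^ n))"
    using assms unfolding fps_summable_at_def by (rule summable_mult)
  then show summable: "fps_summable_at (fps_X * f) w"
    unfolding fps_summable_at_def shift[symmetric] by (subst summable_Suc_iff[symmetric])
  have "eval_fps (fps_X * f) w = (\<Sum>n. (fps_X * f) $ Suc n * w ^ Suc n)"
    unfolding eval_fps_def using suminf_split_head[OF summable[unfolded fps_summable_at_def]] by simp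
  also have "\<dots> = w * eval_fps f w"
    unfolding shift eval_fps_def using assms unfolding fps_summable_at_def by (simp add: suminf_mult)
  finally show "eval_fps (fps_X * f) w = w * eval_fps f w" .
qed

lemma eval_fps_mult_nonneg:
  assumes "fps_nonneg f" "fps_nonneg g" "0 \<le> w" "fps_summable_at f w" "fps_summable_at g w"
  shows "fps_summable_at (f * g) w" "eval_fps (f * g) w = eval_fps f w * eval_fps g w"
proof -
  let ?a = "\<lambda>k. f $ k * w ^ k" and ?b = "\<lambda>k. g $ k * w ^ k"
  have abs_a: "summable (\<lambda>k. norm (?a k))" and abs_b: "summable (\<lambda>k. norm (?b k))"
    using assms unfolding fps_summable_at_def fps_nonneg_def by (simp_all add: abs_mult)
  have coeff: "(\<Sum>i\<le>k. ?a i * ?b (k - i)) = (f * g) $ k * w ^ k" for k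
  proof -
    have "(\<Sum>i\<le>k. ?a i * ?b (k - i)) = (\<Sum>i\<le>k. f $ i * g $ (k - i) * w ^ k)"
      by (intro sum.cong refl) (auto simp: power_add[symmetric])
    also have "\<dots> = (f * g) $ k * w ^ k" by (simp add: fps_mult_nth atLeast0AtMost sum_distrib_right)
    finally show ?thesis .
  qed
  have "(\<lambda>k. (f * g) $ k * w ^ k) sums (eval_fps f w * eval_fps g w)"
    using Cauchy_product_sums[OF abs_a abs_b] unfolding coeff eval_fps_def .
  then show "fps_summable_at (f * g) w" "eval_fps (f * g) w = eval_fps f w * eval_fps g w"
    unfolding fps_summable_at_def eval_fps_def by (auto simp: sums_iff)
qed

lemma eval_fps_power_nonneg:
  assumes "fps_nonneg f" "0 \<le> w" "fps_summable_at f w"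
  shows "fps_summable_at (f ^ k) w \<and> eval_fps (f ^ k) w = eval_fps f w ^ k"
proof (induction k)
  case 0
  show ?case by (simp add: fps_summable_at_1)
next
  case (Suc k)
  then show ?case using eval_fps_mult_nonneg[of f "f ^ k" w] assms fps_nonneg_power[OF assms(1)] by auto
qed

text \<open>Tonelli: the nonnegative double series \<open>K\<^sub>i (P\<^sup>i)\<^sub>n w\<^sup>n\<close> summed by rows gives \<open>K(P(w))\<close>,
  summed by diagonals \<open>(K oo P)(w)\<close>.\<close>

lemma eval_fps_compose_nonneg:
  assumes K: "fps_nonneg K" and P: "fps_nonneg P" "P $ 0 = 0" and w: "0 \<le> w" "fps_summable_at P w"
    and either: "fps_summable_at K (eval_fps P w) \<or> fps_summable_at (K oo P) w"
  shows "fps_summable_at K (eval_fps P w)" "fps_summable_at (K oo P) w"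
    "eval_fps (K oo P) w = eval_fps K (eval_fps P w)"
proof -
  define a where "a i n = K $ i * ((P ^ i) $ n * w ^ n)" for i n
  have nonneg: "0 \<le> a i n" for i n
    using K fps_nonneg_power[OF P(1), of i] w unfolding a_def fps_nonneg_def by auto
  have zero: "a i n = 0" if "n < i" for i n
    using startsby_zero_power_prefix[OF P(2), of i] that unfolding a_def by auto
  have power: "fps_summable_at (P ^ i) w \<and> eval_fps (P ^ i) w = eval_fps P w ^ i" for i
    by (rule eval_fps_power_nonneg[OF P(1) w])
  have rows: "summable (a i)" for i
    using power[of i] unfolding a_def fps_summable_at_def by (intro summable_mult) auto
  have row_sum: "suminf (a i) = K $ i * eval_fps P w ^ i" for i
    using power[of i] unfolding a_def eval_fps_def fps_summable_at_def by (simp add: suminf_mult)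
  have diag_sum: "(\<Sum>i\<le>n. a i n) = (K oo P) $ n * w ^ n" for n
    unfolding a_def fps_compose_nth atLeast0AtMost by (simp add: sum_distrib_right mult.assoc)
  have either': "summable (\<lambda>i. suminf (a i)) \<or> summable (\<lambda>n. \<Sum>i\<le>n. a i n)"
    using either unfolding row_sum diag_sum fps_summable_at_def .
  have "summable (\<lambda>i. suminf (a i))" "summable (\<lambda>n. \<Sum>i\<le>n. a i n)"
    "(\<Sum>i. suminf (a i)) = (\<Sum>n. \<Sum>i\<le>n. a i n)"
    by (rule suminf_triangle_swap; fact nonneg zero rows either')+
  then show "fps_summable_at K (eval_fps P w)" "fps_summable_at (K oo P) w"
    "eval_fps (K oo P) w = eval_fps K (eval_fps P w)"
    unfolding row_sum diag_sum fps_summable_at_def eval_fps_def by simp_all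
qed

section \<open>The derivative bound for the moment--cumulant relation\<close>

lemma fps_deriv_free_relation:
  fixes K M :: "real fps"
  assumes "K oo (fps_X * M) = M - 1"
  shows "fps_deriv M = (fps_deriv K oo (fps_X * M)) * (M + fps_X * fps_deriv M)"
proof -
  have "fps_deriv (K oo (fps_X * M)) = (fps_deriv K oo (fps_X * M)) * fps_deriv (fps_X * M)"
    by (rule fps_compose_deriv) simp
  then show ?thesis using assms by (simp add: add.commute)
qed

lemma mult_lt_one_if_fixed_point:
  fixes A D M w :: real
  assumes fixed: "D = A * (M + w * D)" and "0 \<le> A" "0 \<le> D" "1 \<le> M"
  shows "w * A < 1"
proof (cases "A = 0")
  case False
  then have "0 < A * M" using assms by auto
  then have "0 < D * (1 - w * A)" using fixed by (simp add: algebra_simps)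
  then show ?thesis using \<open>0 \<le> D\<close> by (simp add: zero_less_mult_iff)
qed simp

lemma sums_times_diffs_minus:
  fixes c :: "nat \<Rightarrow> real"
  assumes c0: "c 0 = 0" and D: "(\<lambda>n. diffs c n * x ^ n) sums D" and S: "(\<lambda>n. c n * x ^ n) sums S"
  shows "(\<lambda>i. real (i + 1) * c (i + 2) * x ^ (i + 2)) sums (x * D - S)"
proof -
  define t where "t n = x * (diffs c n * x ^ n) - c (Suc n) * x ^ Suc n" for n
  have "(\<lambda>n. c (Suc n) * x ^ Suc n) sums S"
    using S c0 sums_Suc_iff[of "\<lambda>n. c n * x ^ n" S] by simp
  then have "t sums (x * D - S)" unfolding t_def by (intro sums_diff sums_mult D)
  moreover have "t 0 = 0" unfolding t_def diffs_def by simp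
  ultimately have "(\<lambda>i. t (Suc i)) sums (x * D - S)" using sums_Suc_iff[of t] by simp
  moreover have "t (Suc i) = real (i + 1) * c (i + 2) * x ^ (i + 2)" for i
    unfolding t_def diffs_def by (simp add: algebra_simps)
  ultimately show ?thesis by simp
qed

lemma eval_free_relation:
  fixes K M :: "real fps"
  assumes M: "fps_nonneg M" and K: "fps_nonneg K"
    and rel: "K oo (fps_X * M) = M - 1" and w: "0 \<le> w" "fps_summable_at M w"
  shows "fps_summable_at K (w * eval_fps M w)" "eval_fps K (w * eval_fps M w) = eval_fps M w - 1"
proof -
  have P: "fps_nonneg (fps_X * M)" "(fps_X * M) $ 0 = 0"
    using fps_nonneg_mult[OF fps_nonneg_X M] by auto
  note XM = eval_fps_X_mult_summable[OF w(2)]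
  note diff = eval_fps_diff_summable[OF w(2) fps_summable_at_1]
  have "fps_summable_at (K oo (fps_X * M)) w" using diff(1) unfolding rel .
  note compose = eval_fps_compose_nonneg[OF K P w(1) XM(1), unfolded XM(2)]
  show "fps_summable_at K (w * eval_fps M w)" by (rule compose(1)) (use \<open>fps_summable_at (K oo _) w\<close> in blast)
  show "eval_fps K (w * eval_fps M w) = eval_fps M w - 1"
    using compose(3) diff(2) \<open>fps_summable_at (K oo _) w\<close> unfolding rel by simp
qed

lemma free_relation_deriv_lt_one:
  fixes K M :: "real fps"
  assumes M: "fps_nonneg M" "M $ 0 = 1" and K: "fps_nonneg K"
    and rel: "K oo (fps_X * M) = M - 1"
    and w: "0 < w1" "w1 < w2" and M_w2: "fps_summable_at M w2"
  defines "\<phi> \<equiv> w1 * eval_fps M w1"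
  shows "fps_summable_at (fps_deriv K) \<phi>" "w1 * eval_fps (fps_deriv K) \<phi> < 1"
proof -
  have M_w1: "fps_summable_at M w1" using fps_summable_at_mono[OF M(1) _ _ M_w2] w by simp
  have M1_ge: "1 \<le> eval_fps M w1" using eval_fps_ge_coeff0[OF M(1) _ M_w1] M(2) w by simp
  have "\<phi> < w2 * eval_fps M w1" unfolding \<phi>_def using w M1_ge by simp
  also have "\<dots> \<le> w2 * eval_fps M w2" using eval_fps_mono[OF M(1) _ _ M_w2] w by simp
  finally have \<phi>_lt: "\<bar>\<phi>\<bar> < \<bar>w2 * eval_fps M w2\<bar>" using w M1_ge \<phi>_def by simp
  then show K'_\<phi>: "fps_summable_at (fps_deriv K) \<phi>"
    using fps_summable_at_deriv eval_free_relation(1)[OF M(1) K rel _ M_w2] w by simp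
  define P where "P = fps_X * M"
  have P: "fps_nonneg P" "P $ 0 = 0" "fps_summable_at P w1" "eval_fps P w1 = \<phi>"
    using fps_nonneg_mult[OF fps_nonneg_X M(1)] eval_fps_X_mult_summable[OF M_w1]
    unfolding P_def \<phi>_def by auto
  have K': "fps_nonneg (fps_deriv K)" using K unfolding fps_nonneg_def by simp
  note K'P = eval_fps_compose_nonneg[OF K' P(1,2) _ P(3), unfolded P(4)]
  have D: "fps_nonneg (fps_deriv M)" "fps_summable_at (fps_deriv M) w1"
    using M(1) fps_summable_at_deriv[OF M_w2] w unfolding fps_nonneg_def by auto
  note XD = eval_fps_X_mult_summable[OF D(2)]
  note S = eval_fps_add_summable[OF M_w1 XD(1)]
  have "eval_fps (fps_deriv M) w1 = eval_fps (fps_deriv K oo P) w1 * eval_fps (M + fps_X * fps_deriv M) w1"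
    using eval_fps_mult_nonneg(2)[OF fps_nonneg_compose[OF K' P(1)] _ _ K'P(2) S(1)]
      fps_nonneg_add[OF M(1) fps_nonneg_mult[OF fps_nonneg_X D(1)]] w K'_\<phi>
      fps_deriv_free_relation[OF rel, folded P_def] by simp
  then have "eval_fps (fps_deriv M) w1
      = eval_fps (fps_deriv K) \<phi> * (eval_fps M w1 + w1 * eval_fps (fps_deriv M) w1)"
    using K'P(3) S(2) XD(2) w K'_\<phi> by simp
  then show "w1 * eval_fps (fps_deriv K) \<phi> < 1"
    by (rule mult_lt_one_if_fixed_point)
      (use M1_ge eval_fps_nonneg[OF K' _ K'_\<phi>] eval_fps_nonneg[OF D(1) _ D(2)] w \<phi>_def in auto)
qed

lemma free_relation_weighted_cumulants_lt_one:
  fixes K M :: "real fps"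
  assumes M: "fps_nonneg M" "M $ 0 = 1" and K: "fps_nonneg K" "K $ 0 = 0"
    and rel: "K oo (fps_X * M) = M - 1"
    and w: "0 < w1" "w1 < w2" and M_w2: "fps_summable_at M w2"
  defines "\<phi> \<equiv> w1 * eval_fps M w1"
  shows "summable (\<lambda>i. real (i + 1) * K $ (i + 2) * \<phi> ^ (i + 2))"
    "(\<Sum>i. real (i + 1) * K $ (i + 2) * \<phi> ^ (i + 2)) < 1"
proof -
  note deriv = free_relation_deriv_lt_one[OF M K(1) rel w M_w2, folded \<phi>_def]
  define A where "A = eval_fps (fps_deriv K) \<phi>"
  have M_w1: "fps_summable_at M w1" using fps_summable_at_mono[OF M(1) _ _ M_w2] w by simp
  have M1_ge: "1 \<le> eval_fps M w1" using eval_fps_ge_coeff0[OF M(1) _ M_w1] M(2) w by simp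
  have "(\<lambda>n. diffs (fps_nth K) n * \<phi> ^ n) sums A"
    using deriv(1) unfolding A_def fps_summable_at_def eval_fps_def diffs_def
    by (simp add: summable_sums)
  moreover have "(\<lambda>n. K $ n * \<phi> ^ n) sums (eval_fps M w1 - 1)"
    using eval_free_relation[OF M(1) K(1) rel _ M_w1] w unfolding \<phi>_def
    by (simp add: fps_summable_at_def eval_fps_def sums_iff)
  ultimately have "(\<lambda>i. real (i + 1) * K $ (i + 2) * \<phi> ^ (i + 2)) sums (\<phi> * A - (eval_fps M w1 - 1))"
    by (rule sums_times_diffs_minus[of "fps_nth K", OF K(2)])
  moreover have "\<phi> * A - (eval_fps M w1 - 1) = 1 - eval_fps M w1 * (1 - w1 * A)"
    unfolding \<phi>_def by (simp add: algebra_simps)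
  moreover have "0 < eval_fps M w1 * (1 - w1 * A)" using M1_ge deriv(2) unfolding A_def by simp
  ultimately show "summable (\<lambda>i. real (i + 1) * K $ (i + 2) * \<phi> ^ (i + 2))"
    "(\<Sum>i. real (i + 1) * K $ (i + 2) * \<phi> ^ (i + 2)) < 1"
    by (auto simp: sums_iff)
qed

section \<open>Free cumulants as a composition identity\<close>

lemma fps_compose_X_mult_nth:
  fixes \<kappa> :: "nat \<Rightarrow> real" and M :: "real fps"
  assumes "\<kappa> 0 = 0"
  shows "(Abs_fps \<kappa> oo (fps_X * M)) $ n = (\<Sum>s=1..n. \<kappa> s * (M ^ s) $ (n - s))"
proof -
  have "(Abs_fps \<kappa> oo (fps_X * M)) $ n = (\<Sum>i=0..n. \<kappa> i * ((fps_X * M) ^ i) $ n)"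
    by (simp add: fps_compose_nth)
  also have "\<dots> = (\<Sum>i=0..n. \<kappa> i * (M ^ i) $ (n - i))"
    by (intro sum.cong refl) (auto simp: power_mult_distrib fps_X_power_mult_nth)
  also have "\<dots> = (\<Sum>i=1..n. \<kappa> i * (M ^ i) $ (n - i))"
    using assms by (simp add: sum.atLeast_Suc_atMost)
  finally show ?thesis .
qed

lemma free_relation_iff_fps:
  fixes \<kappa> m :: "nat \<Rightarrow> real"
  assumes k0: "\<kappa> 0 = 0" and m0: "m 0 = 1"
  shows "(\<forall>n\<ge>1. m n = (\<Sum>s=1..n. \<kappa> s * (Abs_fps m ^ s) $ (n - s)))
     \<longleftrightarrow> Abs_fps \<kappa> oo (fps_X * Abs_fps m) = Abs_fps m - 1"
proof
  assume "\<forall>n\<ge>1. m n = (\<Sum>s=1..n. \<kappa> s * (Abs_fps m ^ s) $ (n - s))"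
  then show "Abs_fps \<kappa> oo (fps_X * Abs_fps m) = Abs_fps m - 1"
  proof (intro fps_ext)
    fix n show "(Abs_fps \<kappa> oo (fps_X * Abs_fps m)) $ n = (Abs_fps m - 1) $ n"
      using m0 k0 \<open>\<forall>n\<ge>1. _\<close> unfolding fps_compose_X_mult_nth[of \<kappa>, OF k0] by (cases "n = 0") auto
  qed
next
  assume rel: "Abs_fps \<kappa> oo (fps_X * Abs_fps m) = Abs_fps m - 1"
  show "\<forall>n\<ge>1. m n = (\<Sum>s=1..n. \<kappa> s * (Abs_fps m ^ s) $ (n - s))"
  proof (intro allI impI)
    fix n :: nat assume "1 \<le> n"
    have "(Abs_fps \<kappa> oo (fps_X * Abs_fps m)) $ n = (Abs_fps m - 1) $ n" using rel by simp
    then show "m n = (\<Sum>s=1..n. \<kappa> s * (Abs_fps m ^ s) $ (n - s))"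
      using \<open>1 \<le> n\<close> unfolding fps_compose_X_mult_nth[of \<kappa>, OF k0] by simp
  qed
qed

text \<open>The solution is \<open>(M - 1) \<circ> (X M)\<^sup>-\<^sup>1\<close>, which exists since \<open>X M\<close> has linear
  coefficient \<open>m 0 = 1\<close>.\<close>

lemma ex1_free_relation:
  fixes m :: "nat \<Rightarrow> real"
  assumes m0: "m 0 = 1"
  shows "\<exists>!\<kappa>. \<kappa> 0 = 0 \<and> Abs_fps \<kappa> oo (fps_X * Abs_fps m) = Abs_fps m - 1"
proof -
  define P where "P = fps_X * Abs_fps m"
  have P0: "P $ 0 = 0" and P1: "P $ 1 \<noteq> 0" and I0: "fps_inv P $ 0 = 0"
    using m0 unfolding P_def by (auto simp: fps_inv_def)
  define K where "K = (Abs_fps m - 1) oo fps_inv P"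
  have "K oo P = (Abs_fps m - 1) oo (fps_inv P oo P)"
    unfolding K_def by (rule fps_compose_assoc[OF P0 I0, symmetric])
  then have KP: "K oo P = Abs_fps m - 1" using fps_inv[OF P0 P1] by simp
  show ?thesis
  proof (rule ex1I[of _ "fps_nth K"])
    show "fps_nth K 0 = 0 \<and> Abs_fps (fps_nth K) oo (fps_X * Abs_fps m) = Abs_fps m - 1"
      using KP m0 unfolding K_def P_def by (simp add: fps_nth_inverse)
  next
    fix \<kappa> assume "\<kappa> 0 = 0 \<and> Abs_fps \<kappa> oo (fps_X * Abs_fps m) = Abs_fps m - 1"
    then have "Abs_fps \<kappa> oo P = K oo P" using KP unfolding P_def by simp
    then have "(Abs_fps \<kappa> oo P) oo fps_inv P = (K oo P) oo fps_inv P" by simp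
    then have "Abs_fps \<kappa> = K"
      by (simp add: fps_compose_assoc[OF I0 P0, symmetric] fps_inv_right[OF P0 P1])
    then show "\<kappa> = fps_nth K" by auto
  qed
qed

lemma free_cumulant_relation:
  assumes m0: "moment \<mu> 0 = 1"
  shows "free_cumulant \<mu> 0 = 0"
    "Abs_fps (free_cumulant \<mu>) oo (fps_X * Abs_fps (moment \<mu>)) = Abs_fps (moment \<mu>) - 1"
proof -
  let ?Q = "\<lambda>\<kappa>. \<kappa> 0 = 0 \<and> (\<forall>n\<ge>1. moment \<mu> n = (\<Sum>s=1..n. \<kappa> s * (moment_fps \<mu> ^ s) $ (n - s)))"
  let ?R = "\<lambda>\<kappa>. \<kappa> 0 = 0 \<and> Abs_fps \<kappa> oo (fps_X * Abs_fps (moment \<mu>)) = Abs_fps (moment \<mu>) - 1"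
  have eq: "?Q \<kappa> \<longleftrightarrow> ?R \<kappa>" for \<kappa>
    using free_relation_iff_fps[of \<kappa> "moment \<mu>", OF _ m0] unfolding moment_fps_def by blast
  have "\<exists>!\<kappa>. ?Q \<kappa>" using ex1_free_relation[of "moment \<mu>", OF m0] unfolding eq .
  then have "?Q (free_cumulant \<mu>)" unfolding free_cumulant_def by (rule theI')
  then show "free_cumulant \<mu> 0 = 0"
    "Abs_fps (free_cumulant \<mu>) oo (fps_X * Abs_fps (moment \<mu>)) = Abs_fps (moment \<mu>) - 1"
    using eq by blast+
qed

section \<open>Shifting the law\<close>

text \<open>For the moment series \<open>M(z) = E (1 - z\<Lambda>)\<^sup>-\<^sup>1\<close>, the law of \<open>\<Lambda> + c\<close> has moment series
  \<open>(1 - cz)\<^sup>-\<^sup>1 M(z / (1 - cz))\<close>; in the composition identity this only adds \<open>c\<close> to the first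
  cumulant.\<close>

definition geom_fps :: "real \<Rightarrow> real fps" where
  "geom_fps c = Abs_fps (\<lambda>n. c ^ n)"

definition shift_subst :: "real \<Rightarrow> real fps" where
  "shift_subst c = fps_X * geom_fps c"

lemma shift_subst_nth_0 [simp]: "shift_subst c $ 0 = 0"
  by (simp add: shift_subst_def)

lemma geom_fps_times: "geom_fps c * (1 - fps_const c * fps_X) = 1"
proof -
  have "geom_fps c * (1 - fps_const c * fps_X) = geom_fps c - fps_const c * (fps_X * geom_fps c)"
    by (simp add: right_diff_distrib mult.left_commute mult.commute)
  also have "\<dots> = 1"
    by (intro fps_ext, case_tac n) (simp_all add: geom_fps_def)
  finally show ?thesis .
qed

lemma geom_fps_unique:
  assumes "L * (1 - fps_const y * fps_X) = 1"
  shows "L = geom_fps y"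
proof -
  have "L = L * ((1 - fps_const y * fps_X) * geom_fps y)" using geom_fps_times[of y] by (simp add: ac_simps)
  also have "\<dots> = geom_fps y" using assms by (simp add: mult.assoc[symmetric])
  finally show ?thesis .
qed

lemma geom_fps_eq: "geom_fps c = 1 + fps_const c * shift_subst c"
  by (intro fps_ext, case_tac n) (simp_all add: geom_fps_def shift_subst_def)

lemma geom_fps_shift: "geom_fps c * (geom_fps x oo shift_subst c) = geom_fps (x + c)"
proof (rule geom_fps_unique)
  let ?T = "shift_subst c"
  have "(geom_fps x * (1 - fps_const x * fps_X)) oo ?T
      = (geom_fps x oo ?T) * (1 - fps_const x * ?T)"
    by (simp add: fps_compose_mult_distrib fps_compose_sub_distrib fps_X_fps_compose_startby0)
  then have inv_x: "(geom_fps x oo ?T) * (1 - fps_const x * ?T) = 1"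
    by (simp add: geom_fps_times)
  have "(1 - fps_const c * fps_X) * ?T = fps_X * (geom_fps c * (1 - fps_const c * fps_X))"
    unfolding shift_subst_def by (simp only: ac_simps)
  then have "(1 - fps_const c * fps_X) * ?T = fps_X" by (simp add: geom_fps_times)
  then have "(1 - fps_const c * fps_X) * (fps_const x * ?T) = fps_const x * fps_X"
    by (metis mult.left_commute)
  then have "(1 - fps_const c * fps_X) * (1 - fps_const x * ?T)
      = (1 - fps_const c * fps_X) - fps_const x * fps_X"
    by (simp only: right_diff_distrib mult_1_right)
  also have "\<dots> = 1 - fps_const (x + c) * fps_X" by (simp add: fps_const_add distrib_right)
  finally have "(1 - fps_const c * fps_X) * (1 - fps_const x * ?T) = 1 - fps_const (x + c) * fps_X" .
  then have "geom_fps c * (geom_fps x oo ?T) * (1 - fps_const (x + c) * fps_X)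
      = (geom_fps c * (1 - fps_const c * fps_X)) * ((geom_fps x oo ?T) * (1 - fps_const x * ?T))"
    by (simp only: ac_simps)
  then show "geom_fps c * (geom_fps x oo ?T) * (1 - fps_const (x + c) * fps_X) = 1"
    by (simp add: inv_x geom_fps_times)
qed

lemma geom_fps_mult_compose_nth:
  "(geom_fps c * (F oo shift_subst c)) $ n
    = (\<Sum>i=0..n. c ^ i * (\<Sum>k=0..n-i. F $ k * (shift_subst c ^ k) $ (n - i)))"
  by (simp add: fps_mult_nth fps_compose_nth geom_fps_def)

lemma moment_fps_shift:
  fixes \<mu> :: "real measure"
  assumes "\<And>k. integrable \<mu> (\<lambda>x. x ^ k)"
  shows "(geom_fps c * (Abs_fps (moment \<mu>) oo shift_subst c)) $ n = (\<integral>x. (x + c) ^ n \<partial>\<mu>)"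
proof -
  have "(x + c) ^ n = (\<Sum>i=0..n. c ^ i * (\<Sum>k=0..n-i. x ^ k * (shift_subst c ^ k) $ (n - i)))" for x
  proof -
    have "(x + c) ^ n = geom_fps (x + c) $ n" by (simp add: geom_fps_def)
    also have "\<dots> = (geom_fps c * (geom_fps x oo shift_subst c)) $ n" by (simp only: geom_fps_shift)
    finally have "(x + c) ^ n = (geom_fps c * (geom_fps x oo shift_subst c)) $ n" .
    then show ?thesis by (simp only: geom_fps_mult_compose_nth) (simp add: geom_fps_def)
  qed
  then have "(\<integral>x. (x + c) ^ n \<partial>\<mu>)
      = (\<Sum>i=0..n. c ^ i * (\<Sum>k=0..n-i. (\<integral>x. x ^ k \<partial>\<mu>) * (shift_subst c ^ k) $ (n - i)))"
    using assms by (simp add: integral_sum integrable_sum)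
  then show ?thesis unfolding geom_fps_mult_compose_nth by (simp add: moment_def)
qed

lemma free_relation_shift:
  fixes K M :: "real fps" and c :: real
  assumes rel: "K oo (fps_X * M) = M - 1"
  defines "M' \<equiv> geom_fps c * (M oo shift_subst c)"
  shows "(K + fps_const c * fps_X) oo (fps_X * M') = M' - 1"
proof -
  let ?T = "shift_subst c"
  have XM': "fps_X * M' = (fps_X * M) oo ?T"
    unfolding M'_def by (simp add: fps_compose_mult_distrib shift_subst_def ac_simps)
  have "(K + fps_const c * fps_X) oo (fps_X * M') = (K oo ((fps_X * M) oo ?T)) + fps_const c * (fps_X * M')"
    by (simp add: fps_compose_add_distrib fps_compose_mult_distrib XM')
  also have "K oo ((fps_X * M) oo ?T) = (M oo ?T) - 1"
    using fps_compose_assoc[of ?T "fps_X * M" K] rel by (simp add: fps_compose_sub_distrib)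
  also have "(M oo ?T) - 1 + fps_const c * (fps_X * M') = (1 + fps_const c * ?T) * (M oo ?T) - 1"
    unfolding M'_def shift_subst_def by (simp add: ring_distribs mult.assoc)
  also have "\<dots> = M' - 1" unfolding M'_def geom_fps_eq ..
  finally show ?thesis .
qed

section \<open>Laws with compact support\<close>

lemma AE_in_msupp:
  fixes \<mu> :: "real measure"
  assumes sets: "sets \<mu> = sets borel"
  shows "AE x in \<mu>. x \<in> msupp \<mu>"
proof -
  define F where "F = {ball x e | x e. e > 0 \<and> emeasure \<mu> (ball x e) = 0}"
  have "\<And>T. T \<in> F \<Longrightarrow> open T" unfolding F_def by auto
  then obtain F' where F': "F' \<subseteq> F" "countable F'" "\<Union>F' = \<Union>F" by (rule Lindelof)
  have "T \<in> null_sets \<mu>" if T: "T \<in> F" for T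
  proof -
    obtain x e where "T = ball x e" "emeasure \<mu> (ball x e) = 0" using T unfolding F_def by blast
    moreover have "ball x e \<in> sets \<mu>" unfolding sets by simp
    ultimately show ?thesis by (simp add: null_sets_def)
  qed
  then have "(\<Union>T\<in>F'. T) \<in> null_sets \<mu>" using F' by (intro null_sets_UN') auto
  then have null: "\<Union>F \<in> null_sets \<mu>" using F' by simp
  show ?thesis
  proof (rule AE_I'[OF null], safe)
    fix x assume "x \<notin> msupp \<mu>"
    then obtain e where "e > 0" "emeasure \<mu> (ball x e) = 0"
      unfolding msupp_def by (auto simp: not_gr_zero)
    then show "x \<in> \<Union>F" unfolding F_def by (intro UnionI[of "ball x e"]) auto
  qed
qed

locale compact_law = prob_space \<mu> for \<mu> :: "real measure" +
  assumes sets_eq_borel: "sets \<mu> = sets borel"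
    and compact_msupp: "compact (msupp \<mu>)"
    and msupp_nonempty: "msupp \<mu> \<noteq> {}"
begin

definition supp_inf :: real where
  "supp_inf = Inf (msupp \<mu>)"

definition shifted_moment :: "nat \<Rightarrow> real" where
  "shifted_moment n = (\<integral>x. (x - supp_inf) ^ n \<partial>\<mu>)"

lemma bdd_msupp: "bdd_above (msupp \<mu>)" "bdd_below (msupp \<mu>)"
  using compact_imp_bounded[OF compact_msupp] by (auto intro: bounded_imp_bdd_above bounded_imp_bdd_below)

lemma AE_supp_bounds: "AE x in \<mu>. supp_inf \<le> x \<and> x \<le> supp_sup \<mu>"
  using AE_in_msupp[OF sets_eq_borel]
  by eventually_elim (use bdd_msupp in \<open>auto simp: supp_inf_def supp_sup_def intro: cInf_lower cSup_upper\<close>)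

lemma supp_inf_le_supp_sup: "supp_inf \<le> supp_sup \<mu>"
proof -
  obtain x where "x \<in> msupp \<mu>" using msupp_nonempty by auto
  then show ?thesis unfolding supp_inf_def supp_sup_def
    using bdd_msupp by (meson cInf_lower cSup_upper order.trans)
qed

lemma borel_measurable_law: "f \<in> borel_measurable borel \<Longrightarrow> f \<in> borel_measurable \<mu>"
  by (simp add: measurable_cong_sets[OF sets_eq_borel refl])

lemma integrable_AE_bounded:
  fixes f :: "real \<Rightarrow> real"
  assumes "f \<in> borel_measurable borel" "AE x in \<mu>. norm (f x) \<le> B"
  shows "integrable \<mu> f"
  using assms(2) borel_measurable_law[OF assms(1)] by (rule integrable_const_bound)

lemma integrable_power_plus: "integrable \<mu> (\<lambda>x. (x + c) ^ n)"
proof (rule integrable_AE_bounded)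
  show "AE x in \<mu>. norm ((x + c) ^ n) \<le> (\<bar>supp_inf\<bar> + \<bar>supp_sup \<mu>\<bar> + \<bar>c\<bar>) ^ n"
    using AE_supp_bounds by eventually_elim (auto simp: power_abs intro!: power_mono)
qed measurable

lemma shifted_moment_0: "shifted_moment 0 = 1"
  by (simp add: shifted_moment_def prob_space)

lemma shifted_moment_nonneg: "0 \<le> shifted_moment n"
  unfolding shifted_moment_def
  using AE_supp_bounds by (intro integral_nonneg_AE) (auto elim: eventually_mono)

lemma shifted_moment_le: "shifted_moment n \<le> (supp_sup \<mu> - supp_inf) ^ n"
  unfolding shifted_moment_def
proof (rule integral_le_const)
  show "integrable \<mu> (\<lambda>x. (x - supp_inf) ^ n)" using integrable_power_plus[of "- supp_inf" n] by simp
  show "AE x in \<mu>. (x - supp_inf) ^ n \<le> (supp_sup \<mu> - supp_inf) ^ n"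
    using AE_supp_bounds by eventually_elim (auto intro: power_mono)
qed

lemma fps_nonneg_shifted_moment: "fps_nonneg (Abs_fps shifted_moment)"
  by (simp add: fps_nonneg_def shifted_moment_nonneg)

lemma fps_summable_at_shifted_moment:
  assumes "0 \<le> w" "w * (supp_sup \<mu> - supp_inf) < 1"
  shows "fps_summable_at (Abs_fps shifted_moment) w"
  unfolding fps_summable_at_def
proof (rule summable_comparison_test'[where g="\<lambda>n. (w * (supp_sup \<mu> - supp_inf)) ^ n"])
  show "summable (\<lambda>n. (w * (supp_sup \<mu> - supp_inf)) ^ n)"
    using assms supp_inf_le_supp_sup by (intro summable_geometric) simp
  fix n
  have "shifted_moment n * w ^ n \<le> (supp_sup \<mu> - supp_inf) ^ n * w ^ n"
    using shifted_moment_le[of n] assms by (intro mult_right_mono) auto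
  then show "norm (Abs_fps shifted_moment $ n * w ^ n) \<le> (w * (supp_sup \<mu> - supp_inf)) ^ n"
    using shifted_moment_nonneg[of n] assms by (simp add: power_mult_distrib mult.commute)
qed

lemma AE_stieltjes_kernel_sums:
  assumes z: "supp_sup \<mu> < z"
  defines "w \<equiv> 1 / (z - supp_inf)"
  shows "AE x in \<mu>. (\<forall>n. 0 \<le> w * (w * (x - supp_inf)) ^ n)
    \<and> (\<lambda>n. w * (w * (x - supp_inf)) ^ n) sums (1 / (z - x))"
  using AE_supp_bounds
proof eventually_elim
  case (elim x)
  have w: "0 < w" using z supp_inf_le_supp_sup unfolding w_def by simp
  have q: "0 \<le> w * (x - supp_inf)" "w * (x - supp_inf) < 1"
    using elim z w unfolding w_def by (auto simp: field_simps)
  then have "(\<lambda>n. w * (w * (x - supp_inf)) ^ n) sums (w * (1 / (1 - w * (x - supp_inf))))"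
    by (intro sums_mult geometric_sums) auto
  also have "w * (1 / (1 - w * (x - supp_inf))) = 1 / (z - x)"
    using z elim supp_inf_le_supp_sup unfolding w_def by (auto simp: field_simps)
  finally show ?case using q w by simp
qed

lemma stieltjes_eq_shifted_moment_series:
  assumes z: "supp_sup \<mu> < z"
  defines "w \<equiv> 1 / (z - supp_inf)"
  shows "fps_summable_at (Abs_fps shifted_moment) w"
    "stieltjes \<mu> z = w * eval_fps (Abs_fps shifted_moment) w"
proof -
  show moments: "fps_summable_at (Abs_fps shifted_moment) w"
    using z supp_inf_le_supp_sup unfolding w_def
    by (intro fps_summable_at_shifted_moment) (auto simp: field_simps)
  define f where "f n x = w * (w * (x - supp_inf)) ^ n" for n x
  have f_int: "integrable \<mu> (f n)" for n
    using integrable_power_plus[of "- supp_inf" n] unfolding f_def by (simp add: power_mult_distrib)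
  have f_integral: "(\<integral>x. f n x \<partial>\<mu>) = w * (shifted_moment n * w ^ n)" for n
    unfolding f_def shifted_moment_def by (simp add: power_mult_distrib ac_simps)
  note f_sum = AE_stieltjes_kernel_sums[OF z, folded w_def]
  then have f_abs: "AE x in \<mu>. norm (f n x) = f n x" for n
    by eventually_elim (simp add: f_def)
  have f_norm: "AE x in \<mu>. summable (\<lambda>n. norm (f n x))"
    using f_sum by eventually_elim (simp add: f_def sums_iff)
  have "(\<integral>x. norm (f n x) \<partial>\<mu>) = w * (shifted_moment n * w ^ n)" for n
    using integral_cong_AE[OF _ _ f_abs] f_int f_integral by (simp add: borel_measurable_integrable)
  then have norms: "summable (\<lambda>n. \<integral>x. norm (f n x) \<partial>\<mu>)"
    using moments unfolding fps_summable_at_def by (simp add: summable_mult)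
  have "stieltjes \<mu> z = (\<integral>x. (\<Sum>n. f n x) \<partial>\<mu>)"
    unfolding stieltjes_def
  proof (rule integral_cong_AE)
    show "(\<lambda>x. 1 / (z - x)) \<in> borel_measurable \<mu>" by (intro borel_measurable_law) measurable
    show "(\<lambda>x. \<Sum>n. f n x) \<in> borel_measurable \<mu>"
      using integrable_suminf[OF f_int f_norm norms] by (rule borel_measurable_integrable)
    show "AE x in \<mu>. 1 / (z - x) = (\<Sum>n. f n x)"
      using f_sum by eventually_elim (simp add: f_def sums_iff)
  qed
  also have "\<dots> = (\<Sum>n. \<integral>x. f n x \<partial>\<mu>)" by (rule integral_suminf[OF f_int f_norm norms])
  also have "\<dots> = w * eval_fps (Abs_fps shifted_moment) w"
    using moments unfolding f_integral eval_fps_def fps_summable_at_def by (simp add: suminf_mult)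
  finally show "stieltjes \<mu> z = w * eval_fps (Abs_fps shifted_moment) w" .
qed

lemma stieltjes_pos:
  assumes "supp_sup \<mu> < z"
  shows "0 < stieltjes \<mu> z"
proof -
  note series = stieltjes_eq_shifted_moment_series[OF assms]
  have "1 \<le> eval_fps (Abs_fps shifted_moment) (1 / (z - supp_inf))"
    using eval_fps_ge_coeff0[OF fps_nonneg_shifted_moment _ series(1)] assms supp_inf_le_supp_sup
    by (simp add: shifted_moment_0)
  then show ?thesis using series(2) assms supp_inf_le_supp_sup by simp
qed

lemma stieltjes_antimono:
  assumes "supp_sup \<mu> < z1" "z1 \<le> z2"
  shows "stieltjes \<mu> z2 \<le> stieltjes \<mu> z1"
proof -
  have int: "integrable \<mu> (\<lambda>x. 1 / (z - x))" if z: "supp_sup \<mu> < z" for z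
  proof (rule integrable_AE_bounded)
    show "AE x in \<mu>. norm (1 / (z - x)) \<le> 1 / (z - supp_sup \<mu>)"
      using AE_supp_bounds by eventually_elim (use z in \<open>auto intro!: frac_le\<close>)
  qed measurable
  show ?thesis unfolding stieltjes_def
  proof (rule integral_mono_AE[OF int int])
    show "AE x in \<mu>. 1 / (z2 - x) \<le> 1 / (z1 - x)"
      using AE_supp_bounds by eventually_elim (use assms in \<open>auto intro!: frac_le\<close>)
  qed (use assms in auto)
qed

lemma G_bplus_eq_SUP: "G_bplus \<mu> = (SUP z\<in>{supp_sup \<mu><..}. ereal (stieltjes \<mu> z))"
proof -
  define b where "b = supp_sup \<mu>"
  define L where "L = (SUP z\<in>{b<..}. ereal (stieltjes \<mu> z))"
  have "((\<lambda>z. ereal (stieltjes \<mu> z)) \<longlongrightarrow> L) (at_right b)"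
  proof (rule order_tendstoI)
    fix y assume "y < L"
    then obtain z0 where z0: "b < z0" "y < ereal (stieltjes \<mu> z0)" unfolding L_def less_SUP_iff by auto
    have "eventually (\<lambda>z. z \<in> {b<..<z0}) (at_right b)" by (rule eventually_at_right_real[OF z0(1)])
    then show "eventually (\<lambda>z. y < ereal (stieltjes \<mu> z)) (at_right b)"
      using stieltjes_antimono z0(2) unfolding b_def
      by (elim eventually_mono) (meson ereal_less_eq(3) greaterThanLessThan_iff less_imp_le less_le_trans)
  next
    fix y assume "L < y"
    have "ereal (stieltjes \<mu> z) < y" if "b < z" for z
    proof -
      have "ereal (stieltjes \<mu> z) \<le> L" unfolding L_def using that by (intro SUP_upper) auto
      then show ?thesis using \<open>L < y\<close> by simp
    qed
    then show "eventually (\<lambda>z. ereal (stieltjes \<mu> z) < y) (at_right b)"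
      using eventually_at_right_less[of b] by (elim eventually_mono) simp
  qed
  then show ?thesis unfolding G_bplus_def L_def b_def by (intro tendsto_Lim) auto
qed

end

section \<open>The weighted cumulant series below the edge\<close>

context compact_law
begin

text \<open>The cumulant series of the law of \<open>\<Lambda> - inf supp\<close>.\<close>

definition shifted_cumulant_fps :: "real fps" where
  "shifted_cumulant_fps = Abs_fps (free_cumulant \<mu>) + fps_const (- supp_inf) * fps_X"

lemma shifted_free_relation:
  "shifted_cumulant_fps oo (fps_X * Abs_fps shifted_moment) = Abs_fps shifted_moment - 1"
proof -
  have m0: "moment \<mu> 0 = 1" by (simp add: moment_def prob_space)
  have "Abs_fps shifted_moment = geom_fps (- supp_inf) * (Abs_fps (moment \<mu>) oo shift_subst (- supp_inf))"
    using moment_fps_shift[of \<mu> "- supp_inf"] integrable_power_plus[of 0]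
    by (intro fps_ext) (simp add: shifted_moment_def)
  then show ?thesis
    using free_relation_shift[OF free_cumulant_relation(2)[OF m0], of "- supp_inf"]
    unfolding shifted_cumulant_fps_def by simp
qed

lemma shifted_cumulant_fps_nth_0: "shifted_cumulant_fps $ 0 = 0"
  using free_cumulant_relation(1)[of \<mu>] by (simp add: shifted_cumulant_fps_def moment_def prob_space)

lemma fps_nonneg_shifted_cumulant_fps:
  assumes "\<forall>i\<ge>2. 0 \<le> free_cumulant \<mu> i"
  shows "fps_nonneg shifted_cumulant_fps"
proof -
  have "(Abs_fps (fps_nth shifted_cumulant_fps) oo (fps_X * Abs_fps shifted_moment)) $ 1
      = shifted_cumulant_fps $ 1 * shifted_moment 0"
    by (subst fps_compose_X_mult_nth) (simp_all add: shifted_cumulant_fps_nth_0)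
  then have K1: "shifted_cumulant_fps $ 1 = shifted_moment 1"
    using shifted_free_relation by (simp add: fps_nth_inverse shifted_moment_0)
  have "0 \<le> shifted_cumulant_fps $ n" for n
  proof (cases "2 \<le> n")
    case True
    then show ?thesis using assms by (simp add: shifted_cumulant_fps_def)
  next
    case False
    then have "n = 0 \<or> n = 1" by auto
    then show ?thesis using shifted_cumulant_fps_nth_0 K1 shifted_moment_nonneg[of 1] by auto
  qed
  then show ?thesis unfolding fps_nonneg_def by blast
qed

lemma G_bplus_pos: "0 < G_bplus \<mu>"
proof -
  have "ereal (stieltjes \<mu> (supp_sup \<mu> + 1)) \<le> G_bplus \<mu>"
    unfolding G_bplus_eq_SUP by (intro SUP_upper) auto
  moreover have "0 < stieltjes \<mu> (supp_sup \<mu> + 1)" by (rule stieltjes_pos) simp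
  ultimately show ?thesis by (meson ereal_less_eq(3) less_le_trans zero_ereal_def ereal_less(2))
qed

lemma below_edge:
  assumes \<alpha>: "0 < \<alpha>" and edge: "alpha_s \<mu> < \<alpha> * \<xi>"
  shows "0 < \<xi>" "ereal (1 / (\<xi> * \<alpha>)) < G_bplus \<mu>"
proof -
  have "0 < \<xi> \<and> ereal (1 / (\<xi> * \<alpha>)) < G_bplus \<mu>"
  proof (cases "G_bplus \<mu>")
    case (real l)
    then have l: "0 < l" using G_bplus_pos by simp
    then have "1 / l < \<alpha> * \<xi>" using edge unfolding alpha_s_def real by (simp add: divide_inverse)
    moreover have "0 < 1 / l" using l by simp
    ultimately have "0 < \<xi>" using \<alpha> by (smt (verit) mult_nonpos_nonneg mult.commute)
    moreover have "1 / (\<xi> * \<alpha>) < l"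
      using \<open>1 / l < \<alpha> * \<xi>\<close> l \<alpha> \<open>0 < \<xi>\<close> by (simp add: field_simps mult.commute)
    ultimately show ?thesis using real by simp
  next
    case PInf
    then have "0 < \<alpha> * \<xi>" using edge unfolding alpha_s_def by simp
    then show ?thesis using PInf \<alpha> by (simp add: zero_less_mult_iff)
  next
    case MInf
    then show ?thesis using G_bplus_pos by simp
  qed
  then show "0 < \<xi>" "ereal (1 / (\<xi> * \<alpha>)) < G_bplus \<mu>" by auto
qed

lemma weighted_cumulant_series_lt_one:
  assumes cumulants: "\<forall>i\<ge>2. 0 \<le> free_cumulant \<mu> i" and u: "0 < u" "ereal u < G_bplus \<mu>"
  shows "summable (\<lambda>i. real (i + 1) * free_cumulant \<mu> (i + 2) * u ^ (i + 2))"
    "(\<Sum>i. real (i + 1) * free_cumulant \<mu> (i + 2) * u ^ (i + 2)) < 1"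
proof -
  obtain z where z: "supp_sup \<mu> < z" "u < stieltjes \<mu> z"
    using u(2) unfolding G_bplus_eq_SUP less_SUP_iff by auto
  define z' where "z' = (supp_sup \<mu> + z) / 2"
  define w where "w z = 1 / (z - supp_inf)" for z
  have z': "supp_sup \<mu> < z'" "z' < z" using z unfolding z'_def by auto
  have w: "0 < w z" "w z < w z'" using z z' supp_inf_le_supp_sup unfolding w_def by (auto simp: field_simps)
  define \<phi> where "\<phi> = w z * eval_fps (Abs_fps shifted_moment) (w z)"
  have u_\<phi>: "u < \<phi>" using z stieltjes_eq_shifted_moment_series(2)[OF z(1)] unfolding \<phi>_def w_def by simp
  note bound = free_relation_weighted_cumulants_lt_one[OF fps_nonneg_shifted_moment _
      fps_nonneg_shifted_cumulant_fps[OF cumulants] _ shifted_free_relation w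
      stieltjes_eq_shifted_moment_series(1)[OF z'(1), folded w_def], folded \<phi>_def]
  have K: "shifted_cumulant_fps $ (i + 2) = free_cumulant \<mu> (i + 2)" for i
    by (simp add: shifted_cumulant_fps_def)
  have M0: "Abs_fps shifted_moment $ 0 = 1" by (simp add: shifted_moment_0)
  have le: "real (i + 1) * free_cumulant \<mu> (i + 2) * u ^ (i + 2)
      \<le> real (i + 1) * shifted_cumulant_fps $ (i + 2) * \<phi> ^ (i + 2)" for i
    unfolding K using cumulants u(1) u_\<phi> by (intro mult_left_mono power_mono) auto
  have nonneg: "0 \<le> real (i + 1) * free_cumulant \<mu> (i + 2) * u ^ (i + 2)" for i
    using cumulants u(1) by simp
  show summable: "summable (\<lambda>i. real (i + 1) * free_cumulant \<mu> (i + 2) * u ^ (i + 2))"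
  proof (rule summable_comparison_test'[OF bound(1)[OF M0 shifted_cumulant_fps_nth_0]])
    fix i show "norm (real (i + 1) * free_cumulant \<mu> (i + 2) * u ^ (i + 2))
        \<le> real (i + 1) * shifted_cumulant_fps $ (i + 2) * \<phi> ^ (i + 2)"
      using le[of i] nonneg[of i] by simp
  qed
  show "(\<Sum>i. real (i + 1) * free_cumulant \<mu> (i + 2) * u ^ (i + 2)) < 1"
    using suminf_le[OF le summable bound(1)[OF M0 shifted_cumulant_fps_nth_0]] bound(2)[OF M0 shifted_cumulant_fps_nth_0]
    by linarith
qed

end

section \<open>The Lipschitz estimate\<close>

lemma sum_pairs_le_suminf:
  fixes f :: "nat \<Rightarrow> real"
  assumes nonneg: "\<And>n. 0 \<le> f n" and summable: "summable (\<lambda>n. real (n + 1) * f n)"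
    and F: "finite F"
  shows "(\<Sum>(j, k)\<in>F. f (j + k)) \<le> (\<Sum>n. real (n + 1) * f n)"
proof -
  define N where "N = Suc (Max ((\<lambda>(j, k). j + k) ` F))"
  have img: "(\<lambda>(j, k). j + k) ` F \<subseteq> {..<N}"
  proof
    fix n assume "n \<in> (\<lambda>(j, k). j + k) ` F"
    then have "n \<le> Max ((\<lambda>(j, k). j + k) ` F)" using F by (intro Max_ge) auto
    then show "n \<in> {..<N}" unfolding N_def by simp
  qed
  have "(\<Sum>(j, k)\<in>F. f (j + k))
      = (\<Sum>n<N. \<Sum>p\<in>{p \<in> F. (\<lambda>(j, k). j + k) p = n}. (\<lambda>(j, k). f (j + k)) p)"
    by (rule sum.group[symmetric, OF F _ img]) simp
  also have "\<dots> \<le> (\<Sum>n<N. real (n + 1) * f n)"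
  proof (rule sum_mono)
    fix n
    let ?A = "{p \<in> F. (\<lambda>(j, k). j + k) p = n}"
    have "?A \<subseteq> (\<lambda>j. (j, n - j)) ` {..n}" by (auto simp: image_iff)
    then have "card ?A \<le> card ((\<lambda>j. (j, n - j)) ` {..n})" by (intro card_mono) simp_all
    also have "\<dots> \<le> n + 1" using card_image_le[of "{..n}" "\<lambda>j. (j, n - j)"] by simp
    finally have "card ?A \<le> n + 1" .
    moreover have "(\<Sum>p\<in>?A. (\<lambda>(j, k). f (j + k)) p) = real (card ?A) * f n"
      by (simp add: sum.cong[of ?A ?A _ "\<lambda>_. f n"] case_prod_unfold)
    ultimately show "(\<Sum>p\<in>?A. (\<lambda>(j, k). f (j + k)) p) \<le> real (n + 1) * f n"
      using nonneg[of n] by (simp add: mult_right_mono)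
  qed
  also have "\<dots> \<le> (\<Sum>n. real (n + 1) * f n)"
    using nonneg by (intro sum_le_suminf[OF summable]) auto
  finally show ?thesis .
qed

lemma summable_on_pairs:
  fixes f :: "nat \<Rightarrow> real"
  assumes "\<And>n. 0 \<le> f n" and "summable (\<lambda>n. real (n + 1) * f n)"
  shows "(\<lambda>(j, k). f (j + k)) summable_on UNIV"
    "infsum (\<lambda>(j, k). f (j + k)) UNIV \<le> (\<Sum>n. real (n + 1) * f n)"
proof -
  show summable: "(\<lambda>(j, k). f (j + k)) summable_on UNIV"
    using sum_pairs_le_suminf[OF assms] assms(1)
    by (intro nonneg_bdd_above_summable_on bdd_aboveI2) auto
  show "infsum (\<lambda>(j, k). f (j + k)) UNIV \<le> (\<Sum>n. real (n + 1) * f n)"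
    using sum_pairs_le_suminf[OF assms] by (intro infsum_le_finite_sums[OF summable]) auto
qed

lemma weighted_abs_le_xnorm:
  assumes bounded: "\<And>s t. s \<le> 0 \<Longrightarrow> t \<le> 0 \<Longrightarrow> \<bar>z s t\<bar> \<le> B" and \<xi>: "0 < \<xi>" "\<xi> \<le> 1"
    and "s \<le> 0" "t \<le> 0"
  shows "\<xi> ^ nat (max \<bar>s\<bar> \<bar>t\<bar>) * \<bar>z s t\<bar> \<le> xnorm \<xi> z"
  unfolding xnorm_def
proof (rule cSUP_upper2[where x="(s, t)"])
  have "\<xi> ^ nat (max \<bar>s'\<bar> \<bar>t'\<bar>) * \<bar>z s' t'\<bar> \<le> B" if "s' \<le> 0" "t' \<le> 0" for s' t'
  proof -
    have "\<xi> ^ nat (max \<bar>s'\<bar> \<bar>t'\<bar>) * \<bar>z s' t'\<bar> \<le> \<bar>z s' t'\<bar>"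
      using \<xi> by (intro mult_left_le_one_le) (auto intro: power_le_one)
    then show ?thesis using bounded[OF that] by linarith
  qed
  then show "bdd_above ((\<lambda>p. \<xi> ^ nat (max \<bar>fst p\<bar> \<bar>snd p\<bar>) * \<bar>z (fst p) (snd p)\<bar>)
      ` {(s, t). s \<le> 0 \<and> t \<le> 0})"
    by (intro bdd_aboveI2) auto
qed (use assms in auto)

lemma xnorm_leI:
  assumes "\<And>s t. s \<le> 0 \<Longrightarrow> t \<le> 0 \<Longrightarrow> \<xi> ^ nat (max \<bar>s\<bar> \<bar>t\<bar>) * \<bar>z s t\<bar> \<le> R"
  shows "xnorm \<xi> z \<le> R"
  unfolding xnorm_def by (rule cSUP_least) (use assms in auto)

lemma abs_summable_on_kernel:
  fixes f :: "nat \<Rightarrow> real" and g :: "nat \<Rightarrow> nat \<Rightarrow> real"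
  assumes f: "\<And>n. 0 \<le> f n" "summable (\<lambda>n. real (n + 1) * f n)"
    and g: "\<And>j k. \<bar>g j k\<bar> \<le> f (j + k)"
    and bounded: "\<And>s t. s \<le> 0 \<Longrightarrow> t \<le> 0 \<Longrightarrow> \<bar>z s t\<bar> \<le> B" and "s \<le> 0" "t \<le> 0"
  shows "(\<lambda>p. norm (case p of (j, k) \<Rightarrow> g j k * z (s - int j) (t - int k))) summable_on UNIV"
proof (rule Infinite_Sum.abs_summable_on_comparison_test'[where g="\<lambda>(j, k). f (j + k) * B"])
  show "(\<lambda>(j, k). f (j + k) * B) summable_on UNIV"
    using summable_on_cmult_left[OF summable_on_pairs(1)[OF f], of B] by (simp add: case_prod_unfold)
  fix p :: "nat \<times> nat"
  obtain j k where p: "p = (j, k)" by (cases p)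
  have "\<bar>g j k\<bar> * \<bar>z (s - int j) (t - int k)\<bar> \<le> f (j + k) * B"
    using g[of j k] bounded[of "s - int j" "t - int k"] assms f(1)[of "j + k"] by (intro mult_mono) auto
  then show "norm (case p of (j, k) \<Rightarrow> g j k * z (s - int j) (t - int k))
      \<le> (\<lambda>(j, k). f (j + k) * B) p"
    unfolding p by (simp add: abs_mult)
qed

lemma infsum_kernel_diff:
  fixes f :: "nat \<Rightarrow> real" and g :: "nat \<Rightarrow> nat \<Rightarrow> real" and x y :: "int \<Rightarrow> int \<Rightarrow> real"
  assumes f: "\<And>n. 0 \<le> f n" "summable (\<lambda>n. real (n + 1) * f n)"
    and g: "\<And>j k. \<bar>g j k\<bar> \<le> f (j + k)"
    and bounded: "\<And>s t. s \<le> 0 \<Longrightarrow> t \<le> 0 \<Longrightarrow> \<bar>x s t\<bar> \<le> B"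
      "\<And>s t. s \<le> 0 \<Longrightarrow> t \<le> 0 \<Longrightarrow> \<bar>y s t\<bar> \<le> B"
    and st: "s \<le> 0" "t \<le> 0"
  shows "infsum (\<lambda>(j, k). g j k * (C + x (s - int j) (t - int k))) UNIV
      - infsum (\<lambda>(j, k). g j k * (C + y (s - int j) (t - int k))) UNIV
    = infsum (\<lambda>(j, k). g j k * (x (s - int j) (t - int k) - y (s - int j) (t - int k))) UNIV"
proof -
  define ty where "ty = (\<lambda>(j, k). g j k * (C + y (s - int j) (t - int k)))"
  define d where "d = (\<lambda>(j, k). g j k * (x (s - int j) (t - int k) - y (s - int j) (t - int k)))"
  have bounds: "\<bar>C + y s t\<bar> \<le> \<bar>C\<bar> + B" "\<bar>x s t - y s t\<bar> \<le> 2 * B"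
    if "s \<le> 0" "t \<le> 0" for s t
    using bounded[OF that] by (auto simp: abs_le_iff)
  have "ty summable_on UNIV"
    using abs_summable_on_kernel[OF f g, of "\<lambda>s t. C + y s t", OF bounds(1) st]
    unfolding ty_def by (rule Infinite_Sum.abs_summable_summable)
  moreover have "d summable_on UNIV"
    using abs_summable_on_kernel[OF f g, of "\<lambda>s t. x s t - y s t", OF bounds(2) st]
    unfolding d_def by (rule Infinite_Sum.abs_summable_summable)
  moreover have "(\<lambda>(j, k). g j k * (C + x (s - int j) (t - int k))) = (\<lambda>p. ty p + d p)"
    unfolding ty_def d_def by (simp add: fun_eq_iff algebra_simps)
  ultimately show ?thesis by (simp add: infsum_add ty_def d_def)
qed

text \<open>The kernel \<open>g\<close> gains a factor \<open>\<xi>\<close> per step, which pays for the weight \<open>\<xi>\<^sup>-\<^sup>1\<close> per step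
  that the norm loses when moving from \<open>(s, t)\<close> to \<open>(s - j, t - k)\<close>.\<close>

lemma weighted_kernel_le:
  fixes f :: "nat \<Rightarrow> real" and g :: "nat \<Rightarrow> nat \<Rightarrow> real"
  assumes f: "\<And>n. 0 \<le> f n" "summable (\<lambda>n. real (n + 1) * f n)"
    and g: "\<And>j k. \<bar>g j k\<bar> \<le> f (j + k) * \<xi> ^ (j + k)" and \<xi>: "0 < \<xi>" "\<xi> \<le> 1"
    and bounded: "\<And>s t. s \<le> 0 \<Longrightarrow> t \<le> 0 \<Longrightarrow> \<bar>z s t\<bar> \<le> B" and st: "s \<le> 0" "t \<le> 0"
  shows "\<xi> ^ nat (max \<bar>s\<bar> \<bar>t\<bar>) * \<bar>infsum (\<lambda>(j, k). g j k * z (s - int j) (t - int k)) UNIV\<bar>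
    \<le> (\<Sum>n. real (n + 1) * f n) * xnorm \<xi> z"
proof -
  define M where "M = nat (max \<bar>s\<bar> \<bar>t\<bar>)"
  define D where "D = xnorm \<xi> z"
  define d where "d = (\<lambda>(j, k). g j k * z (s - int j) (t - int k))"
  have weighted: "\<xi> ^ nat (max \<bar>s'\<bar> \<bar>t'\<bar>) * \<bar>z s' t'\<bar> \<le> D" if "s' \<le> 0" "t' \<le> 0" for s' t'
    unfolding D_def using weighted_abs_le_xnorm[OF bounded \<xi> that] .
  have "\<bar>g j k\<bar> \<le> f (j + k)" for j k
    using g[of j k] f(1)[of "j + k"] \<xi> by (meson mult_left_le order.trans power_le_one less_imp_le)
  then have d_abs: "(\<lambda>p. norm (d p)) summable_on UNIV"
    unfolding d_def using abs_summable_on_kernel f bounded st by blast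
  have d_le: "norm (d p) \<le> f (fst p + snd p) * (D / \<xi> ^ M)" for p
  proof -
    obtain j k where p: "p = (j, k)" by (cases p)
    have "\<xi> ^ (M + (j + k)) \<le> \<xi> ^ nat (max \<bar>s - int j\<bar> \<bar>t - int k\<bar>)"
      using st \<xi> unfolding M_def by (intro power_decreasing) auto
    moreover have "\<xi> ^ nat (max \<bar>s - int j\<bar> \<bar>t - int k\<bar>) * \<bar>z (s - int j) (t - int k)\<bar> \<le> D"
      using weighted[of "s - int j" "t - int k"] st by simp
    ultimately have "\<xi> ^ (M + (j + k)) * \<bar>z (s - int j) (t - int k)\<bar> \<le> D"
      by (meson abs_ge_zero mult_right_mono order.trans)
    then have "\<xi> ^ (j + k) * \<bar>z (s - int j) (t - int k)\<bar> \<le> D / \<xi> ^ M"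
      using \<xi> by (simp add: field_simps power_add)
    then have "\<bar>g j k\<bar> * \<bar>z (s - int j) (t - int k)\<bar> \<le> f (j + k) * (D / \<xi> ^ M)"
      using g[of j k] f(1)[of "j + k"] \<xi> 
      by (smt (verit) abs_ge_zero mult.assoc mult_left_mono mult_right_mono zero_le_power)
    then show ?thesis unfolding p d_def by (simp add: abs_mult)
  qed
  have "\<bar>infsum d UNIV\<bar> \<le> infsum (\<lambda>p. norm (d p)) UNIV"
    using norm_infsum_bound[OF d_abs] by simp
  also have "\<dots> \<le> infsum (\<lambda>p. f (fst p + snd p) * (D / \<xi> ^ M)) UNIV"
    using summable_on_cmult_left[OF summable_on_pairs(1)[OF f], of "D / \<xi> ^ M"]
    by (intro infsum_mono[OF d_abs] d_le) (simp add: case_prod_unfold)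
  also have "\<dots> = infsum (\<lambda>(j, k). f (j + k)) UNIV * (D / \<xi> ^ M)"
    using infsum_cmult_left[OF summable_on_pairs(1)[OF f], of "D / \<xi> ^ M"] by (simp add: case_prod_unfold)
  also have "\<dots> \<le> (\<Sum>n. real (n + 1) * f n) * (D / \<xi> ^ M)"
    using summable_on_pairs(2)[OF f] weighted[of 0 0] \<xi>
    by (intro mult_right_mono) (auto intro: order.trans[OF mult_nonneg_nonneg])
  finally show ?thesis
    using \<xi> unfolding M_def[symmetric] d_def[symmetric] D_def[symmetric] by (simp add: field_simps)
qed

lemma hSigma_lipschitz:
  fixes x y :: "int \<Rightarrow> int \<Rightarrow> real"
  assumes \<alpha>: "0 < \<alpha>" and \<xi>: "0 < \<xi>" "\<xi> < 1" and cumulants: "\<forall>i\<ge>2. 0 \<le> free_cumulant \<mu> i"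
    and summable: "summable (\<lambda>n. real (n + 1) * free_cumulant \<mu> (n + 2) * (1 / (\<xi> * \<alpha>)) ^ (n + 2))"
    and x: "x \<in> XI {-a..a}" and y: "y \<in> XI {-a..a}"
  shows "xnorm \<xi> (\<lambda>s t. hSigma \<mu> \<alpha> x s t - hSigma \<mu> \<alpha> y s t)
    \<le> (\<Sum>n. real (n + 1) * free_cumulant \<mu> (n + 2) * (1 / (\<xi> * \<alpha>)) ^ (n + 2))
      * xnorm \<xi> (\<lambda>s t. x s t - y s t)"
proof -
  define u where "u = 1 / (\<xi> * \<alpha>)"
  define f where "f n = free_cumulant \<mu> (n + 2) * u ^ (n + 2)" for n
  define g where "g j k = free_cumulant \<mu> (j + k + 2) * (1 / \<alpha>) ^ (j + k + 2)" for j k :: nat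
  define C where "C = \<alpha>\<^sup>2 * rho_sq \<mu> \<alpha>"
  have f: "\<And>n. 0 \<le> f n" "summable (\<lambda>n. real (n + 1) * f n)"
    using cumulants summable \<xi> \<alpha> unfolding f_def u_def by (auto simp: mult.assoc)
  have g: "\<bar>g j k\<bar> \<le> f (j + k) * \<xi> ^ (j + k)" for j k
  proof -
    have "1 / \<alpha> = \<xi> * u" "0 < u" unfolding u_def using \<xi> \<alpha> by simp_all
    then have "\<bar>g j k\<bar> = f (j + k) * \<xi> ^ (j + k + 2)"
      unfolding g_def f_def using cumulants \<xi>
      by (simp add: abs_mult power_mult_distrib add.assoc mult_ac)
    also have "\<dots> \<le> f (j + k) * \<xi> ^ (j + k)"
      using f(1) \<xi> by (intro mult_left_mono power_decreasing) auto
    finally show ?thesis .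
  qed
  then have g_le_f: "\<bar>g j k\<bar> \<le> f (j + k)" for j k
    using f(1)[of "j + k"] \<xi> by (meson mult_left_le order.trans power_le_one less_imp_le)
  have hSigma: "hSigma \<mu> \<alpha> z s t = infsum (\<lambda>(j, k). g j k * (C + z (s - int j) (t - int k))) UNIV"
    for z s t unfolding hSigma_def g_def C_def by (simp add: add.commute add.left_commute)
  have bounded: "\<bar>x s t\<bar> \<le> a" "\<bar>y s t\<bar> \<le> a" if "s \<le> 0" "t \<le> 0" for s t
  proof -
    have "x s t \<in> {-a..a}" "y s t \<in> {-a..a}" using x y that unfolding XI_def by auto
    then show "\<bar>x s t\<bar> \<le> a" "\<bar>y s t\<bar> \<le> a" by auto
  qed
  then have bounded_diff: "\<bar>x s t - y s t\<bar> \<le> 2 * a" if "s \<le> 0" "t \<le> 0" for s t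
    using bounded[OF that] by (auto simp: abs_le_iff)
  have diff: "hSigma \<mu> \<alpha> x s t - hSigma \<mu> \<alpha> y s t
      = infsum (\<lambda>(j, k). g j k * (x (s - int j) (t - int k) - y (s - int j) (t - int k))) UNIV"
    if st: "s \<le> 0" "t \<le> 0" for s t
    unfolding hSigma by (rule infsum_kernel_diff[OF f g_le_f bounded st])
  show ?thesis
  proof (rule xnorm_leI)
    fix s t :: int assume st: "s \<le> 0" "t \<le> 0"
    have "\<xi> ^ nat (max \<bar>s\<bar> \<bar>t\<bar>) * \<bar>hSigma \<mu> \<alpha> x s t - hSigma \<mu> \<alpha> y s t\<bar>
      \<le> (\<Sum>n. real (n + 1) * f n) * xnorm \<xi> (\<lambda>s t. x s t - y s t)"
      unfolding diff[OF st]
      by (rule weighted_kernel_le[OF f g, where z="\<lambda>s t. x s t - y s t", OF _ _ bounded_diff st])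
        (use \<xi> in auto)
    also have "(\<Sum>n. real (n + 1) * f n)
        = (\<Sum>n. real (n + 1) * free_cumulant \<mu> (n + 2) * (1 / (\<xi> * \<alpha>)) ^ (n + 2))"
      unfolding f_def u_def by (simp add: mult.assoc)
    finally show "\<xi> ^ nat (max \<bar>s\<bar> \<bar>t\<bar>) * \<bar>hSigma \<mu> \<alpha> x s t - hSigma \<mu> \<alpha> y s t\<bar>
      \<le> (\<Sum>n. real (n + 1) * free_cumulant \<mu> (n + 2) * (1 / (\<xi> * \<alpha>)) ^ (n + 2))
        * xnorm \<xi> (\<lambda>s t. x s t - y s t)" .
  qed
qed

lemma Rprime_mult_square:
  assumes summable: "summable (\<lambda>i. real (i + 1) * free_cumulant \<mu> (i + 2) * u ^ (i + 2))"
    and "u \<noteq> 0"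
  shows "Rprime \<mu> u * u\<^sup>2 = (\<Sum>i. real (i + 1) * free_cumulant \<mu> (i + 2) * u ^ (i + 2))"
proof -
  have summand: "real (i + 1) * free_cumulant \<mu> (i + 2) * u ^ (i + 2)
      = real (i + 1) * free_cumulant \<mu> (i + 2) * u ^ i * u\<^sup>2" for i
    by (simp add: power_add power2_eq_square)
  have "summable (\<lambda>i. real (i + 1) * free_cumulant \<mu> (i + 2) * u ^ i)"
    using summable_divide[OF summable, of "u\<^sup>2"] \<open>u \<noteq> 0\<close> unfolding summand by simp
  then show ?thesis unfolding Rprime_def summand by (rule suminf_mult2)
qed

theorem mainTheorem6:
  fixes \<mu> :: "real measure" and \<alpha> \<xi> a :: real
  assumes "prob_space \<mu>" and "sets \<mu> = sets borel"
    and "compact (msupp \<mu>)" and "msupp \<mu> \<noteq> {}"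
    and "\<alpha> > 0"
    and "\<forall>i\<ge>2. free_cumulant \<mu> i \<ge> 0"
    and "\<xi> < 1" and "\<alpha> * \<xi> > alpha_s \<mu>"
    and "hSigma \<mu> \<alpha> ` XI {-a..a} \<subseteq> XI {-a..a}"
  shows "(\<forall>x\<in>XI {-a..a}. \<forall>y\<in>XI {-a..a}.
            xnorm \<xi> (\<lambda>s t. hSigma \<mu> \<alpha> x s t - hSigma \<mu> \<alpha> y s t)
              \<le> Rprime \<mu> (1 / (\<xi> * \<alpha>)) * (1 / (\<xi> * \<alpha>))\<^sup>2 * xnorm \<xi> (\<lambda>s t. x s t - y s t))
         \<and> Rprime \<mu> (1 / (\<xi> * \<alpha>)) * (1 / (\<xi> * \<alpha>))\<^sup>2 < 1"
proof -
  interpret compact_law \<mu>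
    using assms(1-4) by (intro compact_law.intro compact_law_axioms.intro)
  note edge = below_edge[OF assms(5,8)]
  have "0 < 1 / (\<xi> * \<alpha>)" using edge(1) assms(5) by simp
  note series = weighted_cumulant_series_lt_one[OF assms(6) this edge(2)]
  have R: "Rprime \<mu> (1 / (\<xi> * \<alpha>)) * (1 / (\<xi> * \<alpha>))\<^sup>2
      = (\<Sum>i. real (i + 1) * free_cumulant \<mu> (i + 2) * (1 / (\<xi> * \<alpha>)) ^ (i + 2))"
    by (rule Rprime_mult_square[OF series(1)]) (use \<open>0 < 1 / (\<xi> * \<alpha>)\<close> in auto)
  show ?thesis
    using hSigma_lipschitz[OF assms(5) edge(1) assms(7) assms(6) series(1)] series(2)
    unfolding R by blast
qed

end
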